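(* Let $n\ge 2$, $c>0$ and $\alpha>0$ be such that the fractional Hadamard power $H^{\circ\alpha}$ of the $n\times n$ generalized Hilbert matrix $H=\left(\frac{1}{i+j-2+c}\right)_{i,j=1}^n$ is positive definite. For $m\ge 2$, let $\mathcal{A}=(a_{i_1\dots i_m})$ be the $m$th order $n$-dimensional generalized Hilbert tensor $a_{i_1\dots i_m}=\frac{1}{i_1+\dots+i_m-m+c}$. Then $\mathcal{A}^{\circ\alpha}$ is strongly completely positive, and if $m$ is even then $\mathcal{A}^{\circ\alpha}$ is positive definite.
   Context: For a nonnegative tensor $\mathcal{A}=(a_{i_1\dots i_m})$ and $\alpha>0$, its fractional Hadamard power is $\mathcal{A}^{\circ\alpha}=(a_{i_1\dots i_m}^{\alpha})$. A symmetric tensor of order $m$, dimension $n$ is strongly completely positive if it equals $\sum_{k=1}^r(\mathbf{u}^{(k)})^m$ for nonnegative vectors $\mathbf{u}^{(k)}\in\mathbb{R}^n$ spanning $\mathbb{R}^n$, where $\mathbf{u}^m$ has entries $u_{i_1}\cdots u_{i_m}$. For even $m$, a symmetric tensor $(b_{i_1\dots i_m})$ is positive definite if $\sum b_{i_1\dots i_m}x_{i_1}\cdots x_{i_m}>0$ for all nonzero $\mathbf{x}\in\mathbb{R}^n$. *)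

theory Defs
  imports Complex_Main "HOL-Library.Multiset"
begin

text \<open>Conventions: indices are 0-based, so an index i ranges over {0..<n}
 (paper index i+1). A vector in R^n is a function x :: nat => real, of which
 only the values x 0, ..., x (n-1) matter. An order-m, dimension-n tensor is a
 function on index lists of length m with entries < n.\<close>

definition tensor_indices :: "nat \<Rightarrow> nat \<Rightarrow> nat list set" where
  "tensor_indices m n = {is. length is = m \<and> (\<forall>i\<in>set is. i < n)}"

text \<open>Generalized Hilbert matrix H = (1/(i+j-2+c)), 1-based; 0-based: 1/(i+j+c).\<close>
definition gen_hilbert_matrix :: "real \<Rightarrow> nat \<Rightarrow> nat \<Rightarrow> real" where
  "gen_hilbert_matrix c i j = 1 / (real i + real j + c)"

text \<open>Generalized Hilbert tensor a = 1/(i_1+...+i_m - m + c), 1-based;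
 0-based: 1/(i_1+...+i_m + c).\<close>
definition gen_hilbert_tensor :: "real \<Rightarrow> nat list \<Rightarrow> real" where
  "gen_hilbert_tensor c is = 1 / (real (sum_list is) + c)"

definition hadamard_pow_matrix :: "(nat \<Rightarrow> nat \<Rightarrow> real) \<Rightarrow> real \<Rightarrow> nat \<Rightarrow> nat \<Rightarrow> real" where
  "hadamard_pow_matrix H \<alpha> i j = H i j powr \<alpha>"

definition hadamard_pow_tensor :: "(nat list \<Rightarrow> real) \<Rightarrow> real \<Rightarrow> nat list \<Rightarrow> real" where
  "hadamard_pow_tensor A \<alpha> is = A is powr \<alpha>"

definition pos_def_matrix :: "nat \<Rightarrow> (nat \<Rightarrow> nat \<Rightarrow> real) \<Rightarrow> bool" where
  "pos_def_matrix n B \<longleftrightarrow>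
     (\<forall>i<n. \<forall>j<n. B i j = B j i) \<and>
     (\<forall>x::nat \<Rightarrow> real. (\<exists>i<n. x i \<noteq> 0) \<longrightarrow>
        (\<Sum>i<n. \<Sum>j<n. B i j * x i * x j) > 0)"

definition symmetric_tensor :: "nat \<Rightarrow> nat \<Rightarrow> (nat list \<Rightarrow> real) \<Rightarrow> bool" where
  "symmetric_tensor m n A \<longleftrightarrow>
     (\<forall>is\<in>tensor_indices m n. \<forall>js. mset js = mset is \<longrightarrow> A js = A is)"

definition tensor_power_vec :: "(nat \<Rightarrow> real) \<Rightarrow> nat list \<Rightarrow> real" where
  "tensor_power_vec u is = prod_list (map u is)"

definition strongly_completely_positive :: "nat \<Rightarrow> nat \<Rightarrow> (nat list \<Rightarrow> real) \<Rightarrow> bool" where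
  "strongly_completely_positive m n A \<longleftrightarrow>
     symmetric_tensor m n A \<and>
     (\<exists>(r::nat) (u::nat \<Rightarrow> nat \<Rightarrow> real).
        (\<forall>k<r. \<forall>i<n. u k i \<ge> 0) \<and>
        (\<forall>x::nat \<Rightarrow> real. \<exists>t::nat \<Rightarrow> real. \<forall>i<n. x i = (\<Sum>k<r. t k * u k i)) \<and>
        (\<forall>is\<in>tensor_indices m n. A is = (\<Sum>k<r. tensor_power_vec (u k) is)))"

definition pos_def_tensor :: "nat \<Rightarrow> nat \<Rightarrow> (nat list \<Rightarrow> real) \<Rightarrow> bool" where
  "pos_def_tensor m n B \<longleftrightarrow>
     symmetric_tensor m n B \<and>
     (\<forall>x::nat \<Rightarrow> real. (\<exists>i<n. x i \<noteq> 0) \<longrightarrow>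
        (\<Sum>is\<in>tensor_indices m n. B is * prod_list (map x is)) > 0)"

end

(*
  The sequence a s = (s + c) powr -alpha is completely monotone: all its iterated differences
  (-Delta)^k a are nonnegative, since x -> (x + c) powr -b has derivatives of alternating sign.
  Newton's forward formula writes a s, for s <= M, as a nonnegative combination of the ratios
  (j choose s) / (M choose s), which tend to (j / M)^s as M grows. A conic Caratheodory argument
  and compactness then yield a finite moment representation a s = sum_k w_k t_k^s for
  s <= m (n - 1), with w_k >= 0 and t_k in [0, 1].

  The tensor entry a (i_1 + ... + i_m) is therefore the (i_1, ..., i_m) entry of sum_k (u_k)^m, where
  u_k i = w_k^(1/m) t_k^i, and the Hankel matrix a (i + j), which is the Hadamard power of the
  Hilbert matrix, is a weighted Gram matrix of the same vectors u_k; its positive definiteness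
  forces them to span R^n. For even m the form sum A x^m equals sum_k <u_k, x>^m > 0.
*)

theory Submission
  imports Defs
begin

section \<open>Completely monotone sequences\<close>

fun neg_diff :: "nat \<Rightarrow> ('a::{plus,one} \<Rightarrow> real) \<Rightarrow> 'a \<Rightarrow> real" where
  "neg_diff 0 f x = f x"
| "neg_diff (Suc k) f x = neg_diff k f x - neg_diff k f (x + 1)"

definition completely_monotone :: "(nat \<Rightarrow> real) \<Rightarrow> bool" where
  "completely_monotone a \<longleftrightarrow> (\<forall>k s. 0 \<le> neg_diff k a s)"

lemma neg_diff_cmult: "neg_diff k (\<lambda>x. b * f x) x = b * neg_diff k f x"
  by (induction k arbitrary: x) (simp_all add: right_diff_distrib)

lemma neg_diff_of_nat: "neg_diff k (\<lambda>s. f (real s)) s = neg_diff k f (real s)"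
  by (induction k arbitrary: s) (simp_all add: add.commute)

lemma neg_diff_has_real_derivative:
  assumes "\<And>y. y > a \<Longrightarrow> (f has_real_derivative f' y) (at y)" and "x > a"
  shows "(neg_diff k f has_real_derivative neg_diff k f' x) (at x)"
  using assms(2)
proof (induction k arbitrary: x)
  case 0
  then show ?case using assms(1) by simp
next
  case (Suc k)
  have "(neg_diff k f has_real_derivative neg_diff k f' (x + 1)) (at (x + 1))"
    using Suc by simp
  then have "((\<lambda>y. neg_diff k f (y + 1)) has_real_derivative neg_diff k f' (x + 1)) (at x)"
    using DERIV_shift by blast
  from DERIV_diff[OF Suc.IH[OF Suc.prems] this] show ?case
    by (simp add: fun_eq_iff)
qed

lemma neg_diff_powr_nonneg:
  fixes c b x :: real
  assumes "b > 0" and "x > - c"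
  shows "0 \<le> neg_diff k (\<lambda>x. (x + c) powr - b) x"
  using assms
proof (induction k arbitrary: b x)
  case 0
  then show ?case by simp
next
  case (Suc k)
  have deriv: "((\<lambda>x. (x + c) powr - b) has_real_derivative - b * (y + c) powr - (b + 1)) (at y)"
    if "y > - c" for y
  proof -
    have "((\<lambda>x. (x + c) powr - b) has_real_derivative (- b) * (y + c) powr (- b - 1) * 1) (at y)"
      using that by (intro DERIV_chain2[OF has_real_derivative_powr] derivative_eq_intros) auto
    then show ?thesis
      by (simp only: mult_1_right minus_add_distrib diff_conv_add_uminus)
  qed
  have "neg_diff k (\<lambda>x. (x + c) powr - b) (x + 1) \<le> neg_diff k (\<lambda>x. (x + c) powr - b) x"
  proof (rule DERIV_nonpos_imp_nonincreasing[of x "x + 1"])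
    fix y assume "x \<le> y" "y \<le> x + 1"
    with Suc.prems have y: "y > - c" by simp
    have "(neg_diff k (\<lambda>x. (x + c) powr - b) has_real_derivative
        - b * neg_diff k (\<lambda>x. (x + c) powr - (b + 1)) y) (at y)"
      using neg_diff_has_real_derivative[OF deriv y] by (simp only: neg_diff_cmult)
    moreover have "- b * neg_diff k (\<lambda>x. (x + c) powr - (b + 1)) y \<le> 0"
      using Suc.IH[of "b + 1" y] Suc.prems(1) y by (intro mult_nonpos_nonneg) auto
    ultimately show "\<exists>d. (neg_diff k (\<lambda>x. (x + c) powr - b) has_real_derivative d) (at y) \<and> d \<le> 0"
      by blast
  qed simp
  then show ?case by simp
qed

lemma completely_monotone_powr:
  fixes c b :: real
  assumes "c > 0" and "b > 0"
  shows "completely_monotone (\<lambda>s. (real s + c) powr - b)"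
  unfolding completely_monotone_def
proof (intro allI)
  fix k s
  have "real s > - c" using assms(1) by simp
  from neg_diff_powr_nonneg[OF assms(2) this] show "0 \<le> neg_diff k (\<lambda>s. (real s + c) powr - b) s"
    using neg_diff_of_nat[of k "\<lambda>x. (x + c) powr - b"] by simp
qed

section \<open>Newton series and binomial ratios\<close>

lemma newton_forward:
  "a s = (\<Sum>i\<le>L. real (L choose i) * neg_diff (L - i) a (s + i))"
proof (induction L)
  case 0
  then show ?case by simp
next
  case (Suc L)
  let ?g = "\<lambda>k i. neg_diff k a (s + i)"
  have shifted: "(\<Sum>i\<le>L. real (L choose i) * ?g (Suc L - i) i)
      = ?g (Suc L) 0 + (\<Sum>i\<le>L. real (L choose Suc i) * ?g (L - i) (Suc i))"
  proof -
    have "(\<Sum>i\<le>L. real (L choose i) * ?g (Suc L - i) i)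
        = (\<Sum>i\<le>Suc L. real (L choose i) * ?g (Suc L - i) i)"
      by simp
    also have "\<dots> = ?g (Suc L) 0 + (\<Sum>i\<le>L. real (L choose Suc i) * ?g (L - i) (Suc i))"
      by (subst sum.atMost_Suc_shift) simp
    finally show ?thesis .
  qed
  have "a s = (\<Sum>i\<le>L. real (L choose i) * ?g (L - i) i)"
    by (rule Suc.IH)
  also have "\<dots> = (\<Sum>i\<le>L. real (L choose i) * ?g (Suc L - i) i)
      + (\<Sum>i\<le>L. real (L choose i) * ?g (L - i) (Suc i))"
    by (simp add: Suc_diff_le sum.distrib[symmetric] right_diff_distrib)
  also have "\<dots> = ?g (Suc L) 0 + (\<Sum>i\<le>L. real (Suc L choose Suc i) * ?g (L - i) (Suc i))"
    unfolding shifted by (simp add: sum.distrib distrib_right)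
  also have "\<dots> = (\<Sum>i\<le>Suc L. real (Suc L choose i) * ?g (Suc L - i) i)"
    by (subst sum.atMost_Suc_shift) simp
  finally show ?case .
qed

definition newton_weight :: "nat \<Rightarrow> (nat \<Rightarrow> real) \<Rightarrow> nat \<Rightarrow> real" where
  "newton_weight M a j = real (M choose j) * neg_diff (M - j) a j"

lemma newton_weight_nonneg: "completely_monotone a \<Longrightarrow> 0 \<le> newton_weight M a j"
  by (simp add: newton_weight_def completely_monotone_def)

lemma newton_binomial_ratio:
  assumes "s \<le> M"
  shows "a s = (\<Sum>j\<le>M. newton_weight M a j * (real (j choose s) / real (M choose s)))"
proof -
  have ratio: "real ((M - s) choose (j - s)) = real (M choose j) * (real (j choose s) / real (M choose s))"
    if "s \<le> j" "j \<le> M" for j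
  proof -
    have "real (M choose j) * real (j choose s) = real (M choose s) * real ((M - s) choose (j - s))"
      using choose_mult[OF that] by (metis of_nat_mult)
    moreover have "real (M choose s) \<noteq> 0" using that by simp
    ultimately show ?thesis by (simp add: field_simps)
  qed
  have "a s = (\<Sum>i\<le>M - s. real ((M - s) choose i) * neg_diff (M - s - i) a (s + i))"
    by (rule newton_forward)
  also have "\<dots> = (\<Sum>j=s..M. real ((M - s) choose (j - s)) * neg_diff (M - j) a j)"
    using assms sum.shift_bounds_cl_nat_ivl[of "\<lambda>j. real ((M - s) choose (j - s)) * neg_diff (M - j) a j"
        0 s "M - s"]
    by (simp add: atLeast0AtMost add.commute)
  also have "\<dots> = (\<Sum>j=s..M. newton_weight M a j * (real (j choose s) / real (M choose s)))"
    by (intro sum.cong) (auto simp: ratio newton_weight_def)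
  also have "\<dots> = (\<Sum>j\<le>M. newton_weight M a j * (real (j choose s) / real (M choose s)))"
    by (intro sum.mono_neutral_left) auto
  finally show ?thesis .
qed

lemma sum_newton_weight: "(\<Sum>j\<le>M. newton_weight M a j) = a 0"
  using newton_binomial_ratio[of 0 M a] by simp

lemma abs_prod_diff_le_sum:
  fixes f g :: "'a \<Rightarrow> 'b::linordered_field"
  assumes "finite A"
    and "\<And>i. i \<in> A \<Longrightarrow> \<bar>f i\<bar> \<le> 1" and "\<And>i. i \<in> A \<Longrightarrow> \<bar>g i\<bar> \<le> 1"
  shows "\<bar>prod f A - prod g A\<bar> \<le> (\<Sum>i\<in>A. \<bar>f i - g i\<bar>)"
  using assms
proof (induction A rule: finite_induct)
  case empty
  then show ?case by simp
next
  case (insert x A)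
  have "\<bar>prod f (insert x A) - prod g (insert x A)\<bar>
      = \<bar>f x * (prod f A - prod g A) + (f x - g x) * prod g A\<bar>"
    using insert.hyps by (simp add: algebra_simps)
  also have "\<dots> \<le> \<bar>f x\<bar> * \<bar>prod f A - prod g A\<bar> + \<bar>f x - g x\<bar> * \<bar>prod g A\<bar>"
    by (metis abs_mult abs_triangle_ineq)
  also have "\<dots> \<le> 1 * (\<Sum>i\<in>A. \<bar>f i - g i\<bar>) + \<bar>f x - g x\<bar> * 1"
  proof -
    have "\<bar>prod g A\<bar> \<le> 1"
      unfolding abs_prod using insert.prems by (intro prod_le_1) auto
    then show ?thesis using insert by (intro add_mono mult_mono) auto
  qed
  also have "\<dots> = (\<Sum>i\<in>insert x A. \<bar>f i - g i\<bar>)"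
    using insert.hyps by simp
  finally show ?case .
qed

lemma binomial_ratio_eq_prod:
  assumes "s \<le> M"
  shows "real (j choose s) / real (M choose s) = (\<Prod>i<s. (real j - real i) / (real M - real i))"
proof -
  have "real (n choose s) = (\<Prod>i<s. real n - real i) / fact s" for n
    by (simp add: binomial_gbinomial gbinomial_prod_rev atLeast0LessThan)
  moreover have "(\<Prod>i<s. real M - real i) \<noteq> 0"
    using assms by (auto simp: prod_zero_iff)
  ultimately show ?thesis by (simp add: prod_dividef)
qed

lemma binomial_ratio_factor_bounds:
  assumes "2 * D \<le> M" and "i < D" and "j \<le> M"
  shows "\<bar>(real j - real i) / (real M - real i)\<bar> \<le> 1"
    and "\<bar>(real j - real i) / (real M - real i) - real j / real M\<bar> \<le> 2 * real D / real M"
proof -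
  have i: "real i \<le> real D" "real i < real M" "2 * real D \<le> real M"
    using assms by linarith+
  show "\<bar>(real j - real i) / (real M - real i)\<bar> \<le> 1"
    using i assms by (simp add: abs_le_iff divide_simps)
  have "real j / real M - (real j - real i) / (real M - real i)
      = real i * (real M - real j) / (real M * (real M - real i))"
    using i by (simp add: field_simps)
  then have "\<bar>(real j - real i) / (real M - real i) - real j / real M\<bar>
      = real i * (real M - real j) / (real M * (real M - real i))"
    using i assms by (simp add: abs_minus_commute)
  also have "\<dots> \<le> real i * real M / (real M * (real M - real i))"
    using i assms by (intro divide_right_mono mult_left_mono) auto
  also have "\<dots> = real i / (real M - real i)"
    using i by simp
  also have "\<dots> \<le> 2 * real D / real M"
  proof -
    have "real i * real M \<le> real D * real M"
      using i by (intro mult_right_mono) auto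
    moreover have "2 * real D * real i \<le> real D * real M"
      using i mult_left_mono[of "real i" "real D" "2 * real D"]
        mult_left_mono[of "2 * real D" "real M" "real D"] by auto
    ultimately have "real i * real M \<le> 2 * real D * (real M - real i)"
      by (simp add: algebra_simps)
    then show ?thesis using i by (simp add: divide_simps)
  qed
  finally show "\<bar>(real j - real i) / (real M - real i) - real j / real M\<bar> \<le> 2 * real D / real M" .
qed

lemma binomial_ratio_approx:
  assumes "2 * D \<le> M" and "s \<le> D" and "j \<le> M"
  shows "\<bar>real (j choose s) / real (M choose s) - (real j / real M) ^ s\<bar> \<le> 2 * real D ^ 2 / real M"
proof -
  have "\<bar>real (j choose s) / real (M choose s) - (real j / real M) ^ s\<bar>
      = \<bar>(\<Prod>i<s. (real j - real i) / (real M - real i)) - (\<Prod>i<s. real j / real M)\<bar>"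
    using assms by (simp add: binomial_ratio_eq_prod)
  also have "\<dots> \<le> (\<Sum>i<s. \<bar>(real j - real i) / (real M - real i) - real j / real M\<bar>)"
    using binomial_ratio_factor_bounds(1)[OF assms(1) _ assms(3)] assms
    by (intro abs_prod_diff_le_sum) (auto simp: divide_le_eq_1)
  also have "\<dots> \<le> real s * (2 * real D / real M)"
    using binomial_ratio_factor_bounds(2)[OF assms(1) _ assms(3)] assms(2)
      sum_mono[of "{..<s}" _ "\<lambda>_. 2 * real D / real M"] by simp
  also have "\<dots> \<le> real D * (2 * real D / real M)"
    using assms by (intro mult_right_mono) auto
  also have "\<dots> = 2 * real D ^ 2 / real M"
    by (simp add: power2_eq_square)
  finally show ?thesis .
qed

lemma completely_monotone_newton_approx:
  assumes "completely_monotone a" and "2 * D \<le> M" and "s \<le> D"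
  shows "\<bar>a s - (\<Sum>j\<le>M. newton_weight M a j * (real j / real M) ^ s)\<bar>
           \<le> a 0 * (2 * real D ^ 2 / real M)"
proof -
  have "\<bar>a s - (\<Sum>j\<le>M. newton_weight M a j * (real j / real M) ^ s)\<bar>
      = \<bar>\<Sum>j\<le>M. newton_weight M a j * (real (j choose s) / real (M choose s) - (real j / real M) ^ s)\<bar>"
    using assms(2,3) newton_binomial_ratio[of s M a] by (simp add: right_diff_distrib sum_subtractf)
  also have "\<dots> \<le> (\<Sum>j\<le>M. newton_weight M a j *
      \<bar>real (j choose s) / real (M choose s) - (real j / real M) ^ s\<bar>)"
    using newton_weight_nonneg[OF assms(1)] by (intro order_trans[OF sum_abs]) (simp add: abs_mult)
  also have "\<dots> \<le> (\<Sum>j\<le>M. newton_weight M a j * (2 * real D ^ 2 / real M))"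
    using newton_weight_nonneg[OF assms(1)] binomial_ratio_approx[OF assms(2,3)]
    by (intro sum_mono mult_left_mono) auto
  also have "\<dots> = a 0 * (2 * real D ^ 2 / real M)"
    by (simp only: sum_distrib_right[symmetric] sum_newton_weight)
  finally show ?thesis .
qed

section \<open>Conic Caratheodory theorem\<close>

lemma linear_dependent_if_card_gt:
  fixes v :: "'a \<Rightarrow> nat \<Rightarrow> real"
  assumes "finite J" and "D < card J"
  shows "\<exists>c. (\<exists>j\<in>J. c j \<noteq> 0) \<and> (\<forall>s<D. (\<Sum>j\<in>J. c j * v j s) = 0)"
  using assms
proof (induction D arbitrary: J v)
  case 0
  then show ?case by (intro exI[of _ "\<lambda>_. 1"]) (auto simp: card_gt_0_iff)
next
  case (Suc D)
  show ?case
  proof (cases "\<forall>j\<in>J. v j D = 0")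
    case True
    obtain c where "\<exists>j\<in>J. c j \<noteq> 0" "\<forall>s<D. (\<Sum>j\<in>J. c j * v j s) = 0"
      using Suc.IH[of J v] Suc.prems by auto
    then show ?thesis
      using True less_Suc_eq by auto
  next
    case False
    then obtain j0 where j0: "j0 \<in> J" "v j0 D \<noteq> 0" by auto
    \<comment> \<open>eliminate coordinate D using v j0, then recurse on the remaining vectors\<close>
    define v' where "v' j s = v j s - v j D / v j0 D * v j0 s" for j s
    have "D < card (J - {j0})"
      using Suc.prems j0 by simp
    then obtain c where c: "\<exists>j\<in>J - {j0}. c j \<noteq> 0" "\<forall>s<D. (\<Sum>j\<in>J - {j0}. c j * v' j s) = 0"
      using Suc.IH[of "J - {j0}" v'] Suc.prems by auto
    define S where "S = (\<Sum>j\<in>J - {j0}. c j * v j D)"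
    define c' where "c' = c(j0 := - S / v j0 D)"
    have "(\<Sum>j\<in>J. c' j * v j s) = (\<Sum>j\<in>J - {j0}. c j * v' j s)" for s
    proof -
      have "(\<Sum>j\<in>J. c' j * v j s) = c' j0 * v j0 s + (\<Sum>j\<in>J - {j0}. c' j * v j s)"
        by (rule sum.remove[OF Suc.prems(1) j0(1)])
      also have "(\<Sum>j\<in>J - {j0}. c' j * v j s) = (\<Sum>j\<in>J - {j0}. c j * v j s)"
        by (intro sum.cong) (auto simp: c'_def)
      also have "c' j0 * v j0 s + (\<Sum>j\<in>J - {j0}. c j * v j s) = (\<Sum>j\<in>J - {j0}. c j * v' j s)"
        by (simp add: v'_def c'_def S_def right_diff_distrib sum_subtractf sum_distrib_right
            sum_divide_distrib mult.assoc)
      finally show ?thesis .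
    qed
    moreover have "(\<Sum>j\<in>J - {j0}. c j * v' j D) = 0"
      using j0 by (simp add: v'_def)
    ultimately have "\<forall>s<Suc D. (\<Sum>j\<in>J. c' j * v j s) = 0"
      using c(2) less_Suc_eq by auto
    moreover have "\<exists>j\<in>J. c' j \<noteq> 0"
      using c(1) by (auto simp: c'_def)
    ultimately show ?thesis by blast
  qed
qed

lemma linear_dependent_pos_if_card_gt:
  fixes v :: "'a \<Rightarrow> nat \<Rightarrow> real"
  assumes "finite J" and "D < card J"
  shows "\<exists>c. (\<exists>j\<in>J. 0 < c j) \<and> (\<forall>s<D. (\<Sum>j\<in>J. c j * v j s) = 0)"
proof -
  obtain c where c_nz: "\<exists>j\<in>J. c j \<noteq> 0" and c: "\<forall>s<D. (\<Sum>j\<in>J. c j * v j s) = 0"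
    using linear_dependent_if_card_gt[OF assms] by blast
  define c' where "c' = (if \<exists>j\<in>J. 0 < c j then c else (\<lambda>j. - c j))"
  have "\<exists>j\<in>J. 0 < c' j"
    using c_nz by (auto simp: c'_def) (metis less_linear)
  moreover have "\<forall>s<D. (\<Sum>j\<in>J. c' j * v j s) = 0"
    using c by (simp add: c'_def sum_negf)
  ultimately show ?thesis
    by blast
qed

lemma conic_caratheodory_step:
  fixes v :: "'a \<Rightarrow> nat \<Rightarrow> real"
  assumes "finite J" and "D < card J" and "\<forall>j\<in>J. 0 \<le> l j"
  shows "\<exists>j0\<in>J. \<exists>l'. (\<forall>j\<in>J - {j0}. 0 \<le> l' j) \<and>
           (\<forall>s<D. (\<Sum>j\<in>J. l j * v j s) = (\<Sum>j\<in>J - {j0}. l' j * v j s))"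
proof -
  obtain c where c_pos: "\<exists>j\<in>J. 0 < c j" and c: "\<forall>s<D. (\<Sum>j\<in>J. c j * v j s) = 0"
    using linear_dependent_pos_if_card_gt[OF assms(1,2)] by blast
  define P where "P = {j\<in>J. 0 < c j}"
  have P: "finite P" "P \<noteq> {}"
    using assms(1) c_pos by (auto simp: P_def)
  \<comment> \<open>move along the relation until the first weight hits zero\<close>
  define j0 where "j0 = arg_min_on (\<lambda>j. l j / c j) P"
  have j0: "j0 \<in> P" and j0_min: "\<forall>j\<in>P. l j0 / c j0 \<le> l j / c j"
    using arg_min_if_finite(1)[OF P] arg_min_least[OF P] by (auto simp: j0_def)
  define \<theta> where "\<theta> = l j0 / c j0"
  define l' where "l' j = l j - \<theta> * c j" for j
  have "0 \<le> \<theta>"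
    using j0 assms(3) by (simp add: \<theta>_def P_def)
  have "0 \<le> l' j" if "j \<in> J" for j
  proof (cases "0 < c j")
    case True
    then show ?thesis
      using j0_min that by (simp add: l'_def \<theta>_def P_def pos_le_divide_eq)
  next
    case False
    then show ?thesis
      using mult_nonneg_nonpos[OF \<open>0 \<le> \<theta>\<close>, of "c j"] assms(3)[rule_format, OF that]
      by (simp add: l'_def)
  qed
  moreover have "(\<Sum>j\<in>J. l j * v j s) = (\<Sum>j\<in>J - {j0}. l' j * v j s)" if "s < D" for s
  proof -
    have "(\<Sum>j\<in>J. l j * v j s) = (\<Sum>j\<in>J. l' j * v j s) + \<theta> * (\<Sum>j\<in>J. c j * v j s)"
      by (simp add: l'_def left_diff_distrib sum_subtractf sum_distrib_left mult.assoc)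
    also have "\<dots> = (\<Sum>j\<in>J. l' j * v j s)"
      using c that by simp
    also have "\<dots> = (\<Sum>j\<in>J - {j0}. l' j * v j s)"
      using j0 assms(1) by (intro sum.mono_neutral_right) (auto simp: l'_def \<theta>_def P_def)
    finally show ?thesis .
  qed
  ultimately show ?thesis
    using j0 by (auto simp: P_def)
qed

lemma conic_caratheodory:
  fixes v :: "'a \<Rightarrow> nat \<Rightarrow> real"
  assumes "finite J" and "\<forall>j\<in>J. 0 \<le> l j"
  shows "\<exists>J' \<mu>. J' \<subseteq> J \<and> card J' \<le> D \<and> (\<forall>j\<in>J'. 0 \<le> \<mu> j) \<and>
           (\<forall>s<D. (\<Sum>j\<in>J. l j * v j s) = (\<Sum>j\<in>J'. \<mu> j * v j s))"
  using assms
proof (induction "card J" arbitrary: J l rule: less_induct)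
  case less
  show ?case
  proof (cases "card J \<le> D")
    case True
    then show ?thesis using less.prems by blast
  next
    case False
    then have "D < card J" by simp
    then obtain j0 l' where "j0 \<in> J" and l'_nonneg: "\<forall>j\<in>J - {j0}. 0 \<le> l' j"
      and l': "\<forall>s<D. (\<Sum>j\<in>J. l j * v j s) = (\<Sum>j\<in>J - {j0}. l' j * v j s)"
      using conic_caratheodory_step[OF less.prems(1) _ less.prems(2)] by blast
    have "card (J - {j0}) < card J"
      using less.prems(1) \<open>j0 \<in> J\<close> by (rule card_Diff1_less)
    from less.hyps[OF this _ l'_nonneg] less.prems(1)
    obtain J' \<mu> where "J' \<subseteq> J - {j0}" "card J' \<le> D" "\<forall>j\<in>J'. 0 \<le> \<mu> j"
      and "\<forall>s<D. (\<Sum>j\<in>J - {j0}. l' j * v j s) = (\<Sum>j\<in>J'. \<mu> j * v j s)"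
      by blast
    with l' show ?thesis
      by (intro exI[of _ J'] exI[of _ \<mu>]) auto
  qed
qed

lemma conic_caratheodory_indexed:
  fixes v :: "'a \<Rightarrow> nat \<Rightarrow> real"
  assumes "finite J" and "J \<noteq> {}" and "\<forall>j\<in>J. 0 \<le> l j"
  shows "\<exists>w h. (\<forall>k<D. 0 \<le> w k \<and> h k \<in> J) \<and>
           (\<forall>s<D. (\<Sum>j\<in>J. l j * v j s) = (\<Sum>k<D. w k * v (h k) s))"
proof -
  obtain J' \<mu> where J': "J' \<subseteq> J" "card J' \<le> D" "\<forall>j\<in>J'. 0 \<le> \<mu> j"
    and \<mu>: "\<forall>s<D. (\<Sum>j\<in>J. l j * v j s) = (\<Sum>j\<in>J'. \<mu> j * v j s)"
    using conic_caratheodory[OF assms(1,3), where D = D and v = v] by blast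
  obtain g where g: "bij_betw g {..<card J'} J'"
    using ex_bij_betw_nat_finite[OF finite_subset[OF J'(1) assms(1)]] unfolding atLeast0LessThan by blast
  obtain j1 where "j1 \<in> J" using assms(2) by blast
  define h where "h k = (if k < card J' then g k else j1)" for k
  define w where "w k = (if k < card J' then \<mu> (g k) else 0)" for k
  have gJ': "g k \<in> J'" if "k < card J'" for k
    using g that by (auto simp: bij_betw_def)
  have "\<forall>k<D. 0 \<le> w k \<and> h k \<in> J"
    using gJ' J'(1,3) \<open>j1 \<in> J\<close> by (auto simp: w_def h_def)
  moreover have "(\<Sum>j\<in>J'. \<mu> j * v j s) = (\<Sum>k<D. w k * v (h k) s)" for s
  proof -
    have "(\<Sum>j\<in>J'. \<mu> j * v j s) = (\<Sum>k<card J'. \<mu> (g k) * v (g k) s)"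
      by (rule sum.reindex_bij_betw[OF g, symmetric])
    also have "\<dots> = (\<Sum>k<card J'. w k * v (h k) s)"
      by (intro sum.cong) (auto simp: w_def h_def)
    also have "\<dots> = (\<Sum>k<D. w k * v (h k) s)"
      using J'(2) by (intro sum.mono_neutral_left) (auto simp: w_def)
    finally show ?thesis .
  qed
  ultimately show ?thesis
    using \<mu> by metis
qed

section \<open>Finite moment representation\<close>

lemma bounded_seqs_convergent_subseq:
  fixes f :: "nat \<Rightarrow> nat \<Rightarrow> real"
  assumes "\<And>q j. j < D \<Longrightarrow> \<bar>f q j\<bar> \<le> B"
  shows "\<exists>r. strict_mono r \<and> (\<forall>j<D. convergent (\<lambda>q. f (r q) j))"
  using assms
proof (induction D)
  case 0
  show ?case by (intro exI[of _ id]) (simp add: strict_mono_def)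
next
  case (Suc D)
  then obtain r where r: "strict_mono r" "\<forall>j<D. convergent (\<lambda>q. f (r q) j)"
    by auto
  obtain r' where r': "strict_mono r'" "monoseq (\<lambda>q. f (r (r' q)) D)"
    using seq_monosub[of "\<lambda>q. f (r q) D"] by (auto simp: o_def)
  have "Bseq (\<lambda>q. f (r (r' q)) D)"
    using Suc.prems by (intro BseqI'[of _ B]) auto
  with r' have "convergent (\<lambda>q. f (r (r' q)) D)"
    using Bseq_monoseq_convergent by blast
  moreover have "convergent (\<lambda>q. f (r (r' q)) j)" if "j < D" for j
  proof -
    from r(2) that obtain L where "(\<lambda>q. f (r q) j) \<longlonglongrightarrow> L"
      by (auto simp: convergent_def)
    from LIMSEQ_subseq_LIMSEQ[OF this r'(1)] show ?thesis
      by (auto simp: convergent_def o_def)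
  qed
  ultimately have "\<forall>j<Suc D. convergent (\<lambda>q. f ((r \<circ> r') q) j)"
    using less_Suc_eq by auto
  with strict_mono_o[OF r(1) r'(1)] show ?case
    by blast
qed

lemma moments_limit:
  fixes W T :: "nat \<Rightarrow> nat \<Rightarrow> real"
  assumes bounds: "\<And>q k. k < D \<Longrightarrow> 0 \<le> W q k \<and> W q k \<le> B \<and> 0 \<le> T q k \<and> T q k \<le> 1"
    and lim: "\<And>s. s < D \<Longrightarrow> (\<lambda>q. \<Sum>k<D. W q k * T q k ^ s) \<longlonglongrightarrow> a s"
  shows "\<exists>w t. (\<forall>k<D. 0 \<le> w k \<and> 0 \<le> t k \<and> t k \<le> 1) \<and>
           (\<forall>s<D. a s = (\<Sum>k<D. w k * t k ^ s))"
proof -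
  obtain r1 where r1: "strict_mono r1" "\<forall>k<D. convergent (\<lambda>q. W (r1 q) k)"
    using bounded_seqs_convergent_subseq[of D W B] bounds by force
  obtain r2 where r2: "strict_mono r2" "\<forall>k<D. convergent (\<lambda>q. T (r1 (r2 q)) k)"
    using bounded_seqs_convergent_subseq[of D "\<lambda>q. T (r1 q)" 1] bounds by force
  define r where "r = r1 \<circ> r2"
  define w where "w k = lim (\<lambda>q. W (r q) k)" for k
  define t where "t k = lim (\<lambda>q. T (r q) k)" for k
  have W_lim: "(\<lambda>q. W (r q) k) \<longlonglongrightarrow> w k" if "k < D" for k
  proof -
    have "(\<lambda>q. W (r1 q) k) \<longlonglongrightarrow> lim (\<lambda>q. W (r1 q) k)"
      using r1(2) that by (simp add: convergent_LIMSEQ_iff)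
    from LIMSEQ_subseq_LIMSEQ[OF this r2(1)]
    have "(\<lambda>q. W (r q) k) \<longlonglongrightarrow> lim (\<lambda>q. W (r1 q) k)"
      by (simp add: r_def o_def)
    then show ?thesis
      by (simp add: w_def limI)
  qed
  have T_lim: "(\<lambda>q. T (r q) k) \<longlonglongrightarrow> t k" if "k < D" for k
    using r2(2) that by (simp add: t_def r_def o_def convergent_LIMSEQ_iff)
  have "0 \<le> w k \<and> 0 \<le> t k \<and> t k \<le> 1" if "k < D" for k
    using bounds that
    by (intro conjI tendsto_lowerbound[OF W_lim[OF that]] tendsto_lowerbound[OF T_lim[OF that]]
        tendsto_upperbound[OF T_lim[OF that]] always_eventually allI) auto
  moreover have "a s = (\<Sum>k<D. w k * t k ^ s)" if "s < D" for s
  proof (rule LIMSEQ_unique)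
    show "(\<lambda>q. \<Sum>k<D. W (r q) k * T (r q) k ^ s) \<longlonglongrightarrow> a s"
      using LIMSEQ_subseq_LIMSEQ[OF lim[OF that] strict_mono_o[OF r1(1) r2(1)]]
      by (simp add: r_def o_def)
    show "(\<lambda>q. \<Sum>k<D. W (r q) k * T (r q) k ^ s) \<longlonglongrightarrow> (\<Sum>k<D. w k * t k ^ s)"
      by (intro tendsto_sum tendsto_mult tendsto_power W_lim T_lim) simp_all
  qed
  ultimately show ?thesis
    by blast
qed

lemma completely_monotone_approx_moments:
  assumes "completely_monotone a" and "2 * D \<le> M" and "0 < M"
  shows "\<exists>w t. (\<forall>k<D. 0 \<le> w k \<and> w k \<le> a 0 \<and> 0 \<le> t k \<and> t k \<le> 1) \<and>
           (\<forall>s<D. \<bar>a s - (\<Sum>k<D. w k * t k ^ s)\<bar> \<le> a 0 * (2 * real D ^ 2 / real M))"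
proof -
  obtain w h where wh: "\<forall>k<D. 0 \<le> w k \<and> h k \<in> {..M}"
    and moments: "\<forall>s<D. (\<Sum>j\<le>M. newton_weight M a j * (real j / real M) ^ s)
                        = (\<Sum>k<D. w k * (real (h k) / real M) ^ s)"
    using conic_caratheodory_indexed[of "{..M}" "newton_weight M a" D "\<lambda>j s. (real j / real M) ^ s"]
      newton_weight_nonneg[OF assms(1)] by auto
  have "w k \<le> a 0" if "k < D" for k
  proof -
    have "w k \<le> (\<Sum>k<D. w k * (real (h k) / real M) ^ 0)"
      using wh that by (simp, intro member_le_sum) auto
    also have "\<dots> = a 0"
      using moments[rule_format, of 0] that by (simp add: sum_newton_weight)
    finally show ?thesis .
  qed
  with wh assms(3)
  have "\<forall>k<D. 0 \<le> w k \<and> w k \<le> a 0 \<and> 0 \<le> real (h k) / real M \<and> real (h k) / real M \<le> 1"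
    by auto
  moreover have "\<bar>a s - (\<Sum>k<D. w k * (real (h k) / real M) ^ s)\<bar> \<le> a 0 * (2 * real D ^ 2 / real M)"
    if "s < D" for s
    using completely_monotone_newton_approx[OF assms(1,2), of s] moments that by simp
  ultimately show ?thesis
    by (intro exI[of _ w] exI[of _ "\<lambda>k. real (h k) / real M"]) simp
qed

lemma completely_monotone_moments:
  assumes "completely_monotone a"
  shows "\<exists>w t. (\<forall>k<D. 0 \<le> w k \<and> 0 \<le> t k \<and> t k \<le> 1) \<and>
           (\<forall>s<D. a s = (\<Sum>k<D. w k * t k ^ s))"
proof -
  define e where "e q = a 0 * (2 * real D ^ 2 / real (q + 2 * D + 1))" for q
  define approximates where "approximates q w t \<longleftrightarrow>
      (\<forall>k<D. 0 \<le> w k \<and> w k \<le> a 0 \<and> 0 \<le> t k \<and> t k \<le> 1) \<and>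
      (\<forall>s<D. \<bar>a s - (\<Sum>k<D. w k * t k ^ s)\<bar> \<le> e q)" for q and w t :: "nat \<Rightarrow> real"
  have "\<exists>w t. approximates q w t" for q
    using completely_monotone_approx_moments[OF assms, of D "q + 2 * D + 1"]
    by (simp add: approximates_def e_def)
  then obtain W T where "approximates q (W q) (T q)" for q
    by metis
  then have WT: "\<And>q k. k < D \<Longrightarrow> 0 \<le> W q k \<and> W q k \<le> a 0 \<and> 0 \<le> T q k \<and> T q k \<le> 1"
    and err: "\<And>q s. s < D \<Longrightarrow> \<bar>a s - (\<Sum>k<D. W q k * T q k ^ s)\<bar> \<le> e q"
    by (auto simp: approximates_def)
  have "(\<lambda>q. \<Sum>k<D. W q k * T q k ^ s) \<longlonglongrightarrow> a s" if "s < D" for s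
  proof (rule LIM_zero_cancel, rule tendsto_0_le)
    have "(\<lambda>q. a 0 * (2 * real D ^ 2) / real q) \<longlonglongrightarrow> 0"
      by (rule lim_const_over_n)
    from LIMSEQ_ignore_initial_segment[OF this, of "2 * D + 1"]
    show "e \<longlonglongrightarrow> 0"
      unfolding e_def by (simp add: add.assoc)
    show "\<forall>\<^sub>F q in sequentially. norm ((\<Sum>k<D. W q k * T q k ^ s) - a s) \<le> norm (e q) * 1"
      using err[OF that] by (intro always_eventually allI) (smt (verit) real_norm_def abs_minus_commute)
  qed
  then show ?thesis
    using moments_limit[of D W "a 0" T a] WT by blast
qed

section \<open>Tensors built from moment sequences\<close>

lemma tensor_indices_Suc:
  "tensor_indices (Suc m) n = (\<lambda>(i, is). i # is) ` ({..<n} \<times> tensor_indices m n)"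
proof
  show "tensor_indices (Suc m) n \<subseteq> (\<lambda>(i, is). i # is) ` ({..<n} \<times> tensor_indices m n)"
  proof
    fix xs assume "xs \<in> tensor_indices (Suc m) n"
    then show "xs \<in> (\<lambda>(i, is). i # is) ` ({..<n} \<times> tensor_indices m n)"
      by (cases xs) (auto simp: tensor_indices_def)
  qed
qed (auto simp: tensor_indices_def)

lemma sum_prod_list_tensor_indices:
  "(\<Sum>is\<in>tensor_indices m n. prod_list (map f is)) = (\<Sum>i<n. f i :: real) ^ m"
proof (induction m)
  case 0
  have "tensor_indices 0 n = {[]}"
    by (auto simp: tensor_indices_def)
  then show ?case by simp
next
  case (Suc m)
  have "inj_on (\<lambda>(i, is). i # is) ({..<n} \<times> tensor_indices m n)"
    by (auto simp: inj_on_def)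
  then have "(\<Sum>is\<in>tensor_indices (Suc m) n. prod_list (map f is))
      = (\<Sum>(i, is)\<in>{..<n} \<times> tensor_indices m n. f i * prod_list (map f is))"
    unfolding tensor_indices_Suc by (simp add: sum.reindex case_prod_unfold)
  also have "\<dots> = (\<Sum>i<n. f i * (\<Sum>is\<in>tensor_indices m n. prod_list (map f is)))"
    by (simp add: sum.cartesian_product[symmetric] sum_distrib_left)
  also have "\<dots> = (\<Sum>i<n. f i) ^ Suc m"
    by (simp add: Suc.IH sum_distrib_right)
  finally show ?case .
qed

lemma symmetric_tensor_sum_list: "symmetric_tensor m n (\<lambda>is. g (sum_list is))"
  unfolding symmetric_tensor_def by (metis sum_mset_sum_list)

lemma tensor_power_vec_geometric:
  "tensor_power_vec (\<lambda>i. \<rho> * \<tau> ^ i) is = \<rho> ^ length is * \<tau> ^ sum_list is"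
  by (induction "is") (simp_all add: tensor_power_vec_def power_add algebra_simps)

lemma sum_list_le_length_mult:
  "(\<And>i. i \<in> set is \<Longrightarrow> i < n) \<Longrightarrow> sum_list is \<le> length is * (n - 1)"
  by (induction "is") force+

lemma prod_list_map_mult:
  fixes f g :: "'b \<Rightarrow> 'a::comm_monoid_mult"
  shows "prod_list (map (\<lambda>i. f i * g i) xs) = prod_list (map f xs) * prod_list (map g xs)"
  by (induction xs) (simp_all add: mult_ac)

lemma pos_def_matrix_surj:
  assumes "pos_def_matrix n P"
  shows "\<exists>y. \<forall>i<n. x i = (\<Sum>j<n. P i j * y j)"
proof -
  \<comment> \<open>the n columns of P together with x are n + 1 vectors in R^n\<close>
  define v where "v j i = (if j < n then P i j else x i)" for j i
  obtain c where "\<exists>j\<le>n. c j \<noteq> 0" and c: "\<forall>i<n. (\<Sum>j\<le>n. c j * v j i) = 0"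
    using linear_dependent_if_card_gt[of "{..n}" n v] by auto
  have c_split: "(\<Sum>j\<le>n. c j * v j i) = (\<Sum>j<n. P i j * c j) + c n * x i" for i
    by (simp add: lessThan_Suc_atMost[symmetric] v_def mult.commute)
  have "c n \<noteq> 0"
  proof
    assume "c n = 0"
    with \<open>\<exists>j\<le>n. c j \<noteq> 0\<close> have "\<exists>i<n. c i \<noteq> 0"
      using le_neq_implies_less by blast
    with assms have "0 < (\<Sum>i<n. \<Sum>j<n. P i j * c i * c j)"
      by (simp add: pos_def_matrix_def)
    also have "\<dots> = (\<Sum>i<n. c i * (\<Sum>j<n. P i j * c j))"
      by (simp add: sum_distrib_left mult_ac)
    also have "\<dots> = 0"
      using c \<open>c n = 0\<close> by (simp add: c_split)
    finally show False by simp
  qed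
  have "x i = (\<Sum>j<n. P i j * (- c j / c n))" if "i < n" for i
  proof -
    have "c n * x i = - (\<Sum>j<n. P i j * c j)"
      using c[rule_format, OF that] by (simp add: c_split add_eq_0_iff)
    then have "x i = - (\<Sum>j<n. P i j * c j) / c n"
      using \<open>c n \<noteq> 0\<close> by (metis nonzero_mult_div_cancel_left)
    also have "\<dots> = (\<Sum>j<n. P i j * (- c j / c n))"
      by (simp add: sum_divide_distrib sum_negf)
    finally show ?thesis .
  qed
  then show ?thesis
    by (intro exI[of _ "\<lambda>j. - c j / c n"]) blast
qed

lemma pos_def_gram_spans:
  assumes "pos_def_matrix n P"
    and "\<And>i j. i < n \<Longrightarrow> j < n \<Longrightarrow> P i j = (\<Sum>k<r. d k * u k i * u k j)"
  shows "\<exists>t. \<forall>i<n. x i = (\<Sum>k<r. t k * u k i)"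
proof -
  obtain y where y: "\<forall>i<n. x i = (\<Sum>j<n. P i j * y j)"
    using pos_def_matrix_surj[OF assms(1)] by blast
  have "x i = (\<Sum>k<r. (d k * (\<Sum>j<n. u k j * y j)) * u k i)" if "i < n" for i
  proof -
    have "x i = (\<Sum>j<n. \<Sum>k<r. d k * u k i * u k j * y j)"
      using y that by (simp add: assms(2) sum_distrib_right)
    also have "\<dots> = (\<Sum>k<r. \<Sum>j<n. d k * u k i * u k j * y j)"
      by (rule sum.swap)
    also have "\<dots> = (\<Sum>k<r. \<Sum>j<n. (d k * (u k j * y j)) * u k i)"
      by (simp only: mult_ac)
    also have "\<dots> = (\<Sum>k<r. (d k * (\<Sum>j<n. u k j * y j)) * u k i)"
      by (simp only: sum_distrib_left sum_distrib_right)
    finally show ?thesis .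
  qed
  then show ?thesis
    by (intro exI[of _ "\<lambda>k. d k * (\<Sum>j<n. u k j * y j)"]) blast
qed

lemma strongly_completely_positiveI:
  fixes r :: nat
  assumes "symmetric_tensor m n A" and "\<And>k i. k < r \<Longrightarrow> i < n \<Longrightarrow> 0 \<le> u k i"
    and "\<And>x. \<exists>c. \<forall>i<n. x i = (\<Sum>k<r. c k * u k i)"
    and "\<And>is. is \<in> tensor_indices m n \<Longrightarrow> A is = (\<Sum>k<r. tensor_power_vec (u k) is)"
  shows "strongly_completely_positive m n A"
  using assms unfolding strongly_completely_positive_def by blast

lemma moment_tensor_strongly_completely_positive:
  fixes r :: nat
  assumes "2 \<le> m" and "\<And>k. k < r \<Longrightarrow> 0 \<le> w k \<and> 0 \<le> t k"
    and moments: "\<And>s. s \<le> m * (n - 1) \<Longrightarrow> a s = (\<Sum>k<r. w k * t k ^ s)"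
    and "pos_def_matrix n (\<lambda>i j. a (i + j))"
  shows "strongly_completely_positive m n (\<lambda>is. a (sum_list is))"
proof -
  obtain m' where m': "m = m' + 2"
    using assms(1) by (metis add.commute le_Suc_ex)
  define u where "u = (\<lambda>k i. root m (w k) * t k ^ i)"
  have root_pow: "root m (w k) ^ m = w k" if "k < r" for k
    using assms(1,2) that by (simp add: real_root_pow_pos2)
  show ?thesis
  proof (rule strongly_completely_positiveI[where u = u])
    show "symmetric_tensor m n (\<lambda>is. a (sum_list is))"
      by (rule symmetric_tensor_sum_list)
    show "0 \<le> u k i" if "k < r" for k i
      using assms(2) that by (simp add: u_def real_root_ge_zero)
    show "\<exists>c. \<forall>i<n. x i = (\<Sum>k<r. c k * u k i)" for x
      \<comment> \<open>the Hankel matrix is a weighted Gram matrix of the vectors u k\<close>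
    proof (rule pos_def_gram_spans[OF assms(4)])
      fix i j assume "i < n" "j < n"
      then have "i + j \<le> m * (n - 1)"
        using assms(1) mult_right_mono[of 2 m "n - 1"] by linarith
      then have "a (i + j) = (\<Sum>k<r. root m (w k) ^ m * t k ^ i * t k ^ j)"
        by (simp add: moments root_pow power_add mult.assoc)
      also have "\<dots> = (\<Sum>k<r. root m (w k) ^ (m - 2) * u k i * u k j)"
        using m' by (simp add: u_def power_add power2_eq_square algebra_simps)
      finally show "a (i + j) = (\<Sum>k<r. root m (w k) ^ (m - 2) * u k i * u k j)" .
    qed
    show "a (sum_list is) = (\<Sum>k<r. tensor_power_vec (u k) is)" if "is \<in> tensor_indices m n" for "is"
    proof -
      have "length is = m" and "sum_list is \<le> m * (n - 1)"
        using that sum_list_le_length_mult[of "is" n] by (auto simp: tensor_indices_def)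
      then have "a (sum_list is) = (\<Sum>k<r. w k * t k ^ sum_list is)"
        by (simp add: moments)
      also have "\<dots> = (\<Sum>k<r. tensor_power_vec (u k) is)"
        using \<open>length is = m\<close>
        by (intro sum.cong refl) (simp add: u_def tensor_power_vec_geometric root_pow)
      finally show ?thesis .
    qed
  qed
qed

lemma strongly_completely_positive_imp_pos_def_tensor:
  assumes "strongly_completely_positive m n A" and "even m"
  shows "pos_def_tensor m n A"
proof -
  obtain r :: nat and u :: "nat \<Rightarrow> nat \<Rightarrow> real"
    where span: "\<forall>x. \<exists>c. \<forall>i<n. x i = (\<Sum>k<r. c k * u k i)"
    and decomp: "\<forall>is\<in>tensor_indices m n. A is = (\<Sum>k<r. tensor_power_vec (u k) is)"
    using assms(1) unfolding strongly_completely_positive_def by blast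
  have "0 < (\<Sum>is\<in>tensor_indices m n. A is * prod_list (map x is))" if "\<exists>i<n. x i \<noteq> 0" for x
  proof -
    define y where "y k = (\<Sum>i<n. u k i * x i)" for k
    have "(\<Sum>is\<in>tensor_indices m n. A is * prod_list (map x is))
        = (\<Sum>is\<in>tensor_indices m n. \<Sum>k<r. prod_list (map (\<lambda>i. u k i * x i) is))"
      using decomp by (intro sum.cong refl)
        (simp add: tensor_power_vec_def sum_distrib_right prod_list_map_mult[symmetric])
    also have "\<dots> = (\<Sum>k<r. y k ^ m)"
      unfolding y_def by (subst sum.swap) (simp add: sum_prod_list_tensor_indices)
    also have "\<dots> > 0"
    proof -
      \<comment> \<open>x lies in the span of the u k, so it cannot be orthogonal to all of them\<close>
      obtain c where c: "\<forall>i<n. x i = (\<Sum>k<r. c k * u k i)"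
        using span by blast
      from that obtain i0 where "i0 < n" "x i0 \<noteq> 0"
        by blast
      then have "0 < (\<Sum>i<n. x i * x i)"
        by (intro sum_pos2[of _ i0]) (auto simp: zero_less_mult_iff)
      also have "\<dots> = (\<Sum>k<r. c k * y k)"
        using c by (simp add: y_def sum_distrib_left sum_distrib_right sum.swap[of _ "{..<n}"] mult_ac)
      finally obtain k where "k < r" "y k \<noteq> 0"
        by (metis (no_types, lifting) lessThan_iff mult_zero_right sum.neutral less_irrefl)
      then show ?thesis
        using \<open>even m\<close> by (intro sum_pos2[of _ k]) (auto simp: zero_le_even_power zero_less_power_eq)
    qed
    finally show ?thesis .
  qed
  moreover have "symmetric_tensor m n A"
    using assms(1) by (simp add: strongly_completely_positive_def)
  ultimately show ?thesis
    by (simp add: pos_def_tensor_def)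
qed

theorem theorem4p4:
  fixes n m :: nat and c \<alpha> :: real
  assumes "n \<ge> 2" and "c > 0" and "\<alpha> > 0"
    and "pos_def_matrix n (hadamard_pow_matrix (gen_hilbert_matrix c) \<alpha>)"
    and "m \<ge> 2"
  shows "strongly_completely_positive m n (hadamard_pow_tensor (gen_hilbert_tensor c) \<alpha>)
       \<and> (even m \<longrightarrow> pos_def_tensor m n (hadamard_pow_tensor (gen_hilbert_tensor c) \<alpha>))"
proof -
  define a :: "nat \<Rightarrow> real" where "a = (\<lambda>s. (real s + c) powr - \<alpha>)"
  have entry: "(1 / (real s + c)) powr \<alpha> = a s" for s
    using \<open>c > 0\<close> by (simp add: a_def powr_divide powr_minus_divide)
  have tensor: "hadamard_pow_tensor (gen_hilbert_tensor c) \<alpha> = (\<lambda>is. a (sum_list is))"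
    by (simp add: fun_eq_iff hadamard_pow_tensor_def gen_hilbert_tensor_def entry)
  have hankel: "hadamard_pow_matrix (gen_hilbert_matrix c) \<alpha> = (\<lambda>i j. a (i + j))"
    by (simp add: fun_eq_iff hadamard_pow_matrix_def gen_hilbert_matrix_def flip: entry)
  obtain w t where atoms: "\<forall>k<Suc (m * (n - 1)). 0 \<le> w k \<and> 0 \<le> t k \<and> t k \<le> 1"
    and moments: "\<forall>s<Suc (m * (n - 1)). a s = (\<Sum>k<Suc (m * (n - 1)). w k * t k ^ s)"
    using completely_monotone_moments[OF completely_monotone_powr[OF \<open>c > 0\<close> \<open>\<alpha> > 0\<close>]]
    unfolding a_def by blast
  have "strongly_completely_positive m n (\<lambda>is. a (sum_list is))"
  proof (rule moment_tensor_strongly_completely_positive[where r = "Suc (m * (n - 1))" and w = w and t = t])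
    show "0 \<le> w k \<and> 0 \<le> t k" if "k < Suc (m * (n - 1))" for k
      using atoms that by simp
    show "a s = (\<Sum>k<Suc (m * (n - 1)). w k * t k ^ s)" if "s \<le> m * (n - 1)" for s
      using moments that by simp
  qed (use assms(4,5) hankel in simp_all)
  then show ?thesis
    unfolding tensor using strongly_completely_positive_imp_pos_def_tensor by blast
qed

end
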